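(* Let $s>2$ be an integer, $A_s=\{0,1,\dots,s-1\}$, and let $A_0,A_1$ be disjoint subsets of $A_s$ with $A_0\cup A_1=A_s$, $A_0\neq A_s\neq A_1$. Let $f:[0,1]\to[0,1]$ be defined by $$f\big(\Delta^{s*}_{\alpha_1\alpha_2\dots\alpha_n\dots}\big)=\Delta^{2*}_{\beta_1\beta_2\dots\beta_n\dots},$$ where $\beta_1=0$ if $\alpha_1\in A_0$, $\beta_1=1$ if $\alpha_1\in A_1$, and for $n\ge 1$, $\beta_{n+1}=\beta_n$ if $\alpha_{n+1}=\alpha_n$ and $\beta_{n+1}=1-\beta_n$ if $\alpha_{n+1}\neq\alpha_n$. Then $f$ is continuous on $[0,1]$ and has unbounded (infinite) total variation on $[0,1]$.
   Context: $L_s=A_s\times A_s\times\cdots$ denotes the space of sequences $(\alpha_n)$ with $\alpha_n\in A_s$. The $s*$-representation is an encoding of $[0,1]$ topologically equivalent to the classical $s$-adic one: there is a continuous strictly monotone surjection $h_s:[0,1]\to[0,1]$ such that $\Delta^{s*}_{\alpha_1\alpha_2\dots}=h_s\big(\sum_{n\ge1}\alpha_n s^{-n}\big)$ for every $(\alpha_n)\in L_s$. Likewise the $2*$-representation is given by a continuous strictly monotone surjection $h_2:[0,1]\to[0,1]$ via $\Delta^{2*}_{\beta_1\beta_2\dots}=h_2\big(\sum_{n\ge1}\beta_n 2^{-n}\big)$, $\beta_n\in\{0,1\}$. The value of $f(x)$ given by the formula does not depend on which $s*$-code of $x$ is used, so $f$ is a well-defined function on $[0,1]$. *)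

theory Defs
  imports "HOL-Analysis.Analysis" "HOL-Library.Extended_Real"
begin

text \<open>Digit sequences are indexed from 0: alpha 0 is the paper's alpha_1.\<close>

definition sadic_value :: "nat \<Rightarrow> (nat \<Rightarrow> nat) \<Rightarrow> real" where
  "sadic_value s \<alpha> = (\<Sum>n. real (\<alpha> n) / real s ^ Suc n)"

definition digit_seq :: "nat \<Rightarrow> (nat \<Rightarrow> nat) \<Rightarrow> bool" where
  "digit_seq s \<alpha> \<longleftrightarrow> (\<forall>n. \<alpha> n < s)"

fun beta_seq :: "nat set \<Rightarrow> (nat \<Rightarrow> nat) \<Rightarrow> nat \<Rightarrow> nat" where
  "beta_seq A1 \<alpha> 0 = (if \<alpha> 0 \<in> A1 then 1 else 0)"
| "beta_seq A1 \<alpha> (Suc n) =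
     (if \<alpha> (Suc n) = \<alpha> n then beta_seq A1 \<alpha> n else 1 - beta_seq A1 \<alpha> n)"

text \<open>f(Delta^{s*}_{alpha}) = Delta^{2*}_{beta}, where Delta^{s*}_alpha = hs(sadic value of alpha)
  and Delta^{2*}_beta = h2(binary value of beta); some s*-code of x is chosen.\<close>
definition f_map :: "nat \<Rightarrow> nat set \<Rightarrow> (real \<Rightarrow> real) \<Rightarrow> (real \<Rightarrow> real) \<Rightarrow> real \<Rightarrow> real" where
  "f_map s A1 hs h2 x =
     h2 (sadic_value 2 (beta_seq A1 (SOME \<alpha>. digit_seq s \<alpha> \<and> hs (sadic_value s \<alpha>) = x)))"

definition total_variation :: "(real \<Rightarrow> real) \<Rightarrow> real \<Rightarrow> real \<Rightarrow> ereal" where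
  "total_variation g a b =
     (SUP p \<in> {(x, n). x 0 = a \<and> x n = b \<and> (\<forall>i<n. x i \<le> x (Suc i))}.
        ereal (\<Sum>i<snd p. \<bar>g (fst p (Suc i)) - g (fst p i)\<bar>))"

end

theory Submission
  imports Defs
begin

text \<open>
  Write f = h2 \<circ> g \<circ> hs\<inverse>, where g sends the base-s number with digits \<alpha> to the binary
  number with digits \<beta>. Two base-s codes of one point first differ in digits c and c + 1 and
  then continue with s - 1, s - 1, ... and 0, 0, ... respectively; in both codes the \<beta>-tail is
  constant and opposite to the preceding \<beta>-digit, so g is well defined. As the first N digits
  of \<alpha> fix the first N digits of \<beta>, g is continuous.

  On each base-s cylinder of rank N, f takes both endpoint values of the h2-image of the dyadic
  interval coded by the \<beta>-prefix, so the variation of f is at least the sum of these h2-masses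
  over all s^N words. A binary word with c changes of digit is the \<beta>-prefix of at least 2^c
  words, since every change can be realised by s - 1 \<ge> 2 digits. Finally, h2 is continuous, so
  for each j the h2-mass of the binary words of length N with fewer than j changes tends to 0,
  and the sums are unbounded.
\<close>

section \<open>Base-s expansions\<close>

fun sadic_prepend :: "nat \<Rightarrow> nat \<Rightarrow> nat \<Rightarrow> (nat \<Rightarrow> nat) \<Rightarrow> nat \<Rightarrow> nat" where
  "sadic_prepend s 0 m \<gamma> = \<gamma>"
| "sadic_prepend s (Suc N) m \<gamma> = sadic_prepend s N (m div s) (case_nat (m mod s) \<gamma>)"

lemma sadic_prepend_tail: "sadic_prepend s N m \<gamma> (N + j) = \<gamma> j"
  by (induction N arbitrary: m \<gamma> j) (simp_all flip: add_Suc_right)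

lemma sadic_prepend_last: "sadic_prepend s (Suc N) m \<gamma> N = m mod s"
  using sadic_prepend_tail[of s N "m div s" "case_nat (m mod s) \<gamma>" 0] by simp

lemma sadic_prepend_prefix: "i < N \<Longrightarrow> sadic_prepend s N m \<gamma> i = sadic_prepend s N m \<gamma>' i"
proof (induction N arbitrary: m \<gamma> \<gamma>')
  case (Suc N)
  show ?case
  proof (cases "i = N")
    case True
    then show ?thesis by (simp only: sadic_prepend_last)
  next
    case False
    then show ?thesis using Suc by simp
  qed
qed simp

locale sadic_base =
  fixes s :: nat
  assumes base: "2 \<le> s"
begin

lemma digit_seq_real_le: "digit_seq s \<alpha> \<Longrightarrow> real (\<alpha> n) \<le> real s - 1"
  unfolding digit_seq_def by (metis Suc_leI of_nat_Suc of_nat_le_iff le_diff_eq add.commute)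

lemma sums_sadic_const: "(\<lambda>n. c / real s ^ Suc n) sums (c / (real s - 1))"
proof -
  have "(\<lambda>n. c / real s * (1 / real s) ^ n) sums (c / real s * (1 / (1 - 1 / real s)))"
    using base by (intro sums_mult geometric_sums) auto
  moreover have "c / real s * (1 / (1 - 1 / real s)) = c / (real s - 1)"
    using base by (simp add: field_simps)
  moreover have "(\<lambda>n. c / real s * (1 / real s) ^ n) = (\<lambda>n. c / real s ^ Suc n)"
    by (simp add: power_divide)
  ultimately show ?thesis by metis
qed

lemma sadic_value_const: "sadic_value s (\<lambda>_. t) = real t / (real s - 1)"
  using sums_sadic_const[of "real t"] unfolding sadic_value_def by (simp add: sums_iff)

lemma summable_sadic:
  assumes "digit_seq s \<alpha>"
  shows "summable (\<lambda>n. real (\<alpha> n) / real s ^ Suc n)"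
proof (rule summable_comparison_test')
  show "summable (\<lambda>n. (real s - 1) / real s ^ Suc n)"
    using sums_sadic_const by (rule sums_summable)
  show "norm (real (\<alpha> n) / real s ^ Suc n) \<le> (real s - 1) / real s ^ Suc n" for n
    using digit_seq_real_le[OF assms] by (simp add: divide_right_mono)
qed

lemma sadic_value_sums:
  "digit_seq s \<alpha> \<Longrightarrow> (\<lambda>n. real (\<alpha> n) / real s ^ Suc n) sums sadic_value s \<alpha>"
  unfolding sadic_value_def by (rule summable_sums, rule summable_sadic)

lemma sadic_value_in_unit:
  assumes "digit_seq s \<alpha>"
  shows "sadic_value s \<alpha> \<in> {0..1}"
proof -
  have "0 \<le> sadic_value s \<alpha>"
    unfolding sadic_value_def by (intro suminf_nonneg summable_sadic assms) auto
  have "sadic_value s \<alpha> \<le> (\<Sum>n. (real s - 1) / real s ^ Suc n)"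
    unfolding sadic_value_def
    using summable_sadic[OF assms] sums_summable[OF sums_sadic_const] digit_seq_real_le[OF assms]
    by (intro suminf_le) (auto simp: divide_right_mono)
  also have "\<dots> = 1"
    using sums_sadic_const[of "real s - 1"] base by (simp add: sums_iff)
  finally show ?thesis using \<open>0 \<le> sadic_value s \<alpha>\<close> by simp
qed

lemma digit_seq_shift: "digit_seq s \<alpha> \<Longrightarrow> digit_seq s (\<lambda>j. \<alpha> (j + N))"
  unfolding digit_seq_def by simp

lemma sadic_value_split:
  assumes "digit_seq s \<alpha>"
  shows "sadic_value s \<alpha> =
    (\<Sum>i<N. real (\<alpha> i) / real s ^ Suc i) + sadic_value s (\<lambda>j. \<alpha> (j + N)) / real s ^ N"
proof -
  have "(\<Sum>n. real (\<alpha> (n + N)) / real s ^ Suc (n + N))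
      = (\<Sum>n. real (\<alpha> (n + N)) / real s ^ Suc n / real s ^ N)"
    by (simp add: power_add field_simps)
  also have "\<dots> = sadic_value s (\<lambda>j. \<alpha> (j + N)) / real s ^ N"
    unfolding sadic_value_def
    by (rule suminf_divide) (rule summable_sadic[OF digit_seq_shift[OF assms]])
  finally show ?thesis
    unfolding sadic_value_def
    using suminf_split_initial_segment[OF summable_sadic[OF assms], of N] by simp
qed

lemma sadic_value_prefix_dist:
  assumes "digit_seq s \<alpha>" "digit_seq s \<alpha>'" "\<And>i. i < N \<Longrightarrow> \<alpha> i = \<alpha>' i"
  shows "\<bar>sadic_value s \<alpha> - sadic_value s \<alpha>'\<bar> \<le> 1 / real s ^ N"
proof -
  define T T' where "T = sadic_value s (\<lambda>j. \<alpha> (j + N))" and "T' = sadic_value s (\<lambda>j. \<alpha>' (j + N))"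
  have "T \<in> {0..1}" "T' \<in> {0..1}"
    unfolding T_def T'_def using assms(1,2) by (metis sadic_value_in_unit digit_seq_shift)+
  then have "\<bar>T - T'\<bar> / real s ^ N \<le> 1 / real s ^ N"
    by (intro divide_right_mono) auto
  moreover have "sadic_value s \<alpha> - sadic_value s \<alpha>' = (T - T') / real s ^ N"
    unfolding sadic_value_split[OF assms(1), of N] sadic_value_split[OF assms(2), of N] T_def T'_def
    using assms(3) by (simp add: diff_divide_distrib)
  ultimately show ?thesis by (simp add: abs_divide)
qed

lemma digit_eq_0_if_sadic_value_eq_0:
  assumes "digit_seq s \<gamma>" "sadic_value s \<gamma> = 0"
  shows "\<gamma> n = 0"
proof -
  have "\<forall>n. real (\<gamma> n) / real s ^ Suc n = 0"
    using assms(2) summable_sadic[OF assms(1)] unfolding sadic_value_def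
    by (subst (asm) suminf_eq_zero_iff) auto
  then show ?thesis using base by simp
qed

lemma digit_eq_max_if_sadic_value_eq_1:
  assumes "digit_seq s \<gamma>" "sadic_value s \<gamma> = 1"
  shows "\<gamma> n = s - 1"
proof -
  define \<gamma>' where "\<gamma>' n = s - 1 - \<gamma> n" for n
  have "(\<lambda>n. (real s - 1) / real s ^ Suc n - real (\<gamma> n) / real s ^ Suc n) sums (1 - 1)"
    using sums_diff[OF sums_sadic_const[of "real s - 1"] sadic_value_sums[OF assms(1)]]
      assms(2) base by simp
  moreover have "real (\<gamma>' n) = real s - 1 - real (\<gamma> n)" for n
    using assms(1) unfolding \<gamma>'_def digit_seq_def by (simp add: of_nat_diff Suc_leI)
  ultimately have "sadic_value s \<gamma>' = 0"
    unfolding sadic_value_def by (simp add: diff_divide_distrib sums_iff)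
  moreover have "digit_seq s \<gamma>'"
    using base unfolding \<gamma>'_def digit_seq_def by simp
  ultimately have "\<gamma>' n = 0" by (rule digit_eq_0_if_sadic_value_eq_0[rotated])
  moreover have "\<gamma> n < s" using assms(1) unfolding digit_seq_def ..
  ultimately show ?thesis unfolding \<gamma>'_def by arith
qed

lemma sadic_value_eq_first_diff:
  assumes \<alpha>: "digit_seq s \<alpha>" and \<alpha>': "digit_seq s \<alpha>'"
    and prefix: "\<And>i. i < k \<Longrightarrow> \<alpha> i = \<alpha>' i" and less: "\<alpha> k < \<alpha>' k"
    and eq: "sadic_value s \<alpha> = sadic_value s \<alpha>'"
  shows "\<alpha>' k = Suc (\<alpha> k)" "\<And>j. k < j \<Longrightarrow> \<alpha> j = s - 1" "\<And>j. k < j \<Longrightarrow> \<alpha>' j = 0"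
proof -
  define T T' where "T = sadic_value s (\<lambda>j. \<alpha> (j + Suc k))"
    and "T' = sadic_value s (\<lambda>j. \<alpha>' (j + Suc k))"
  have T: "T \<le> 1" and T': "0 \<le> T'"
    unfolding T_def T'_def using \<alpha> \<alpha>'
    by (metis atLeastAtMost_iff sadic_value_in_unit digit_seq_shift)+
  have "(\<Sum>i<k. real (\<alpha> i) / real s ^ Suc i) = (\<Sum>i<k. real (\<alpha>' i) / real s ^ Suc i)"
    using prefix by simp
  then have "(real (\<alpha> k) + T) / real s ^ Suc k = (real (\<alpha>' k) + T') / real s ^ Suc k"
    using eq unfolding sadic_value_split[OF \<alpha>, of "Suc k"] sadic_value_split[OF \<alpha>', of "Suc k"]
      T_def T'_def by (simp add: add_divide_distrib)
  then have "real (\<alpha> k) + T = real (\<alpha>' k) + T'"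
    using base by simp
  moreover have "real (\<alpha> k) + 1 \<le> real (\<alpha>' k)" using less by linarith
  ultimately have "\<alpha>' k = Suc (\<alpha> k)" "T = 1" "T' = 0" using T T' by linarith+
  then show "\<alpha>' k = Suc (\<alpha> k)" by simp
  show "\<alpha> j = s - 1" if "k < j" for j
    using digit_eq_max_if_sadic_value_eq_1[OF digit_seq_shift[OF \<alpha>] \<open>T = 1\<close>[unfolded T_def]]
      that by (metis le_add_diff_inverse2 less_eq_Suc_le)
  show "\<alpha>' j = 0" if "k < j" for j
    using digit_eq_0_if_sadic_value_eq_0[OF digit_seq_shift[OF \<alpha>'] \<open>T' = 0\<close>[unfolded T'_def]]
      that by (metis le_add_diff_inverse2 less_eq_Suc_le)
qed

lemma sadic_code_exists:
  assumes "t \<in> {0..1}"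
  obtains \<alpha> where "digit_seq s \<alpha>" "sadic_value s \<alpha> = t"
proof (cases "t = 1")
  case True
  then show ?thesis
    using that[of "\<lambda>_. s - 1"] sadic_value_const base by (simp add: digit_seq_def of_nat_diff)
next
  case False
  with assms have t: "0 \<le> t" "t < 1" by auto
  define q where "q n = \<lfloor>real s ^ n * t\<rfloor>" for n
  define \<alpha> where "\<alpha> n = nat (q (Suc n) - int s * q n)" for n
  have q_step: "int s * q n \<le> q (Suc n) \<and> q (Suc n) < int s * q n + int s" for n
  proof -
    have "real s * real_of_int (q n) \<le> real s ^ Suc n * t"
      "real s ^ Suc n * t < real s * (real_of_int (q n) + 1)"
      using base unfolding q_def by (simp_all add: mult.assoc)
    then show ?thesis
      unfolding q_def[of "Suc n"] by (simp add: le_floor_iff floor_less_iff distrib_left)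
  qed
  have digit: "real (\<alpha> n) = real_of_int (q (Suc n)) - real s * real_of_int (q n)" "\<alpha> n < s" for n
    using q_step[of n] unfolding \<alpha>_def by (simp_all add: nat_less_iff)
  have "(\<Sum>i<n. real (\<alpha> i) / real s ^ Suc i) = real_of_int (q n) / real s ^ n" for n
  proof -
    have "(\<Sum>i<n. real (\<alpha> i) / real s ^ Suc i)
        = (\<Sum>i<n. real_of_int (q (Suc i)) / real s ^ Suc i - real_of_int (q i) / real s ^ i)"
      using base by (intro sum.cong) (simp_all add: digit(1) diff_divide_distrib)
    also have "\<dots> = real_of_int (q n) / real s ^ n - real_of_int (q 0) / real s ^ 0"
      by (rule sum_lessThan_telescope)
    finally show ?thesis using t unfolding q_def by (simp add: floor_eq_iff)
  qed
  moreover have "(\<lambda>n. real_of_int (q n) / real s ^ n) \<longlonglongrightarrow> t"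
  proof (rule tendsto_sandwich[of "\<lambda>n. t - (1 / real s) ^ n" _ _ "\<lambda>_. t"])
    have "(\<lambda>n. (1 / real s) ^ n) \<longlonglongrightarrow> 0" using base by (intro LIMSEQ_power_zero) auto
    then show "(\<lambda>n. t - (1 / real s) ^ n) \<longlonglongrightarrow> t" by (auto intro: tendsto_eq_intros)
    have "t - (1 / real s) ^ n \<le> real_of_int (q n) / real s ^ n"
      "real_of_int (q n) / real s ^ n \<le> t" for n
    proof -
      have "real s ^ n * t - 1 \<le> real_of_int (q n)" "real_of_int (q n) \<le> real s ^ n * t"
        unfolding q_def by linarith+
      moreover have "t - (1 / real s) ^ n = (real s ^ n * t - 1) / real s ^ n"
        using base by (simp add: field_simps power_divide)
      ultimately show "t - (1 / real s) ^ n \<le> real_of_int (q n) / real s ^ n"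
        "real_of_int (q n) / real s ^ n \<le> t"
        using base by (simp_all add: divide_right_mono pos_divide_le_eq mult.commute)
    qed
    then show "\<forall>\<^sub>F n in sequentially. t - (1 / real s) ^ n \<le> real_of_int (q n) / real s ^ n"
      "\<forall>\<^sub>F n in sequentially. real_of_int (q n) / real s ^ n \<le> t"
      by (simp_all add: always_eventually)
  qed simp
  ultimately have "(\<lambda>n. real (\<alpha> n) / real s ^ Suc n) sums t"
    unfolding sums_def by simp
  then have "sadic_value s \<alpha> = t"
    unfolding sadic_value_def by (simp add: sums_iff)
  then show ?thesis using that digit(2) unfolding digit_seq_def by blast
qed

lemma digit_seq_sadic_prepend: "digit_seq s \<gamma> \<Longrightarrow> digit_seq s (sadic_prepend s N m \<gamma>)"
proof (induction N arbitrary: m \<gamma>)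
  case (Suc N)
  have "digit_seq s (case_nat (m mod s) \<gamma>)"
    using Suc.prems base unfolding digit_seq_def by (simp split: nat.split)
  then show ?case using Suc.IH by simp
qed simp

lemma sadic_value_Cons:
  assumes "d < s" "digit_seq s \<gamma>"
  shows "sadic_value s (case_nat d \<gamma>) = (real d + sadic_value s \<gamma>) / real s"
proof -
  have "digit_seq s (case_nat d \<gamma>)"
    using assms unfolding digit_seq_def by (simp split: nat.split)
  from sadic_value_split[OF this, of 1] show ?thesis by (simp add: add_divide_distrib)
qed

lemma sadic_value_prepend:
  assumes "digit_seq s \<gamma>" "m < s ^ N"
  shows "sadic_value s (sadic_prepend s N m \<gamma>) = (real m + sadic_value s \<gamma>) / real s ^ N"
  using assms
proof (induction N arbitrary: m \<gamma>)
  case (Suc N)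
  have "digit_seq s (case_nat (m mod s) \<gamma>)"
    using Suc.prems base unfolding digit_seq_def by (simp split: nat.split)
  moreover have "m div s < s ^ N"
    using Suc.prems(2) by (simp add: less_mult_imp_div_less mult.commute)
  ultimately have "sadic_value s (sadic_prepend s (Suc N) m \<gamma>)
      = (real (m div s) + (real (m mod s) + sadic_value s \<gamma>) / real s) / real s ^ N"
    using Suc.IH sadic_value_Cons[OF _ Suc.prems(1)] base by simp
  also have "\<dots> = (real s * real (m div s) + real (m mod s) + sadic_value s \<gamma>) / real s ^ Suc N"
    using base by (simp add: field_simps)
  also have "real s * real (m div s) + real (m mod s) = real m"
    by (metis of_nat_add of_nat_mult div_mult_mod_eq mult.commute)
  finally show ?case .
qed simp

lemma sadic_cell_exists:
  assumes "y \<in> {0..1}"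
  obtains m where "m < s ^ N" "real m \<le> real s ^ N * y" "real s ^ N * y \<le> real m + 1"
proof (cases "y = 1")
  case True
  have "1 \<le> s ^ N" using base by simp
  then show ?thesis using that[of "s ^ N - 1"] True by (simp add: of_nat_diff)
next
  case False
  with assms have "0 \<le> real s ^ N * y" "real s ^ N * y < real s ^ N" using base by auto
  then show ?thesis
    using that[of "nat \<lfloor>real s ^ N * y\<rfloor>"] by (simp add: nat_less_iff floor_less_iff)
qed

lemma sadic_cylinder_code:
  assumes "m < s ^ N" "real m \<le> real s ^ N * y" "real s ^ N * y \<le> real m + 1"
  obtains \<gamma> where "digit_seq s \<gamma>" "sadic_value s (sadic_prepend s N m \<gamma>) = y"
proof -
  have "real s ^ N * y - real m \<in> {0..1}" using assms by simp
  then obtain \<gamma> where \<gamma>: "digit_seq s \<gamma>" "sadic_value s \<gamma> = real s ^ N * y - real m"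
    by (rule sadic_code_exists)
  then have "sadic_value s (sadic_prepend s N m \<gamma>) = y"
    using sadic_value_prepend[OF \<gamma>(1) assms(1)] base by simp
  with \<gamma>(1) show ?thesis by (rule that)
qed

lemma sadic_value_eventually_const:
  assumes "digit_seq s \<alpha>" "\<And>j. N \<le> j \<Longrightarrow> \<alpha> j = c"
  shows "sadic_value s \<alpha> = (\<Sum>i<N. real (\<alpha> i) / real s ^ Suc i) + real c / (real s - 1) / real s ^ N"
  using sadic_value_split[OF assms(1), of N] sadic_value_const[of c] assms(2) by simp

end

interpretation binary: sadic_base 2
  by unfold_locales simp

section \<open>The digit map and its continuity\<close>

lemma digit_seq_beta_seq: "digit_seq 2 (beta_seq A1 \<alpha>)"
proof -
  have "beta_seq A1 \<alpha> n < 2" for n by (induction n) auto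
  then show ?thesis unfolding digit_seq_def ..
qed

lemma beta_seq_prefix:
  "(\<And>j. j \<le> i \<Longrightarrow> \<alpha> j = \<alpha>' j) \<Longrightarrow> beta_seq A1 \<alpha> i = beta_seq A1 \<alpha>' i"
  by (induction i) auto

lemma beta_seq_const_tail:
  assumes "\<And>j. k < j \<Longrightarrow> \<alpha> j = c" "k < j"
  shows "beta_seq A1 \<alpha> j = (if c = \<alpha> k then beta_seq A1 \<alpha> k else 1 - beta_seq A1 \<alpha> k)"
  using assms(2)
proof (induction j)
  case (Suc j)
  then show ?case using assms(1) by (cases "k < j") (auto simp: less_Suc_eq)
qed simp

lemma beta_value_flip_tail:
  assumes "\<And>j. k < j \<Longrightarrow> \<alpha> j = c" "c \<noteq> \<alpha> k"
  shows "sadic_value 2 (beta_seq A1 \<alpha>) = (\<Sum>i<k. real (beta_seq A1 \<alpha> i) / 2 ^ Suc i) + 1 / 2 ^ Suc k"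
proof -
  let ?\<beta> = "beta_seq A1 \<alpha>"
  have "?\<beta> k < 2"
    using digit_seq_beta_seq unfolding digit_seq_def ..
  then have one: "real (?\<beta> k) + real (1 - ?\<beta> k) = 1"
    by (cases "?\<beta> k") auto
  have "?\<beta> j = 1 - ?\<beta> k" if "Suc k \<le> j" for j
    using beta_seq_const_tail[OF assms(1)] assms(2) that by simp
  then have "sadic_value 2 ?\<beta>
      = (\<Sum>i<k. real (?\<beta> i) / 2 ^ Suc i) + (real (?\<beta> k) + real (1 - ?\<beta> k)) / 2 ^ Suc k"
    using binary.sadic_value_eventually_const[OF digit_seq_beta_seq, of "Suc k"]
    by (simp add: add_divide_distrib)
  then show ?thesis unfolding one .
qed

context sadic_base
begin

lemma beta_value_first_diff:
  assumes "digit_seq s \<alpha>" "digit_seq s \<alpha>'" "\<And>i. i < k \<Longrightarrow> \<alpha> i = \<alpha>' i" "\<alpha> k < \<alpha>' k"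
    and "sadic_value s \<alpha> = sadic_value s \<alpha>'"
  shows "sadic_value 2 (beta_seq A1 \<alpha>) = sadic_value 2 (beta_seq A1 \<alpha>')"
proof -
  note diff = sadic_value_eq_first_diff[OF assms]
  have "\<alpha>' k < s" using assms(2) unfolding digit_seq_def ..
  then have "s - 1 \<noteq> \<alpha> k" "0 \<noteq> \<alpha>' k" using assms(4) by arith+
  have "sadic_value 2 (beta_seq A1 \<alpha>)
      = (\<Sum>i<k. real (beta_seq A1 \<alpha> i) / 2 ^ Suc i) + 1 / 2 ^ Suc k"
    using diff(2) \<open>s - 1 \<noteq> \<alpha> k\<close> by (rule beta_value_flip_tail)
  moreover have "sadic_value 2 (beta_seq A1 \<alpha>')
      = (\<Sum>i<k. real (beta_seq A1 \<alpha>' i) / 2 ^ Suc i) + 1 / 2 ^ Suc k"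
    using diff(3) \<open>0 \<noteq> \<alpha>' k\<close> by (rule beta_value_flip_tail)
  moreover have "beta_seq A1 \<alpha> i = beta_seq A1 \<alpha>' i" if "i < k" for i
    using assms(3) that by (intro beta_seq_prefix) simp
  ultimately show ?thesis by simp
qed

lemma beta_value_eq_if_sadic_value_eq:
  assumes "digit_seq s \<alpha>" "digit_seq s \<alpha>'" "sadic_value s \<alpha> = sadic_value s \<alpha>'"
  shows "sadic_value 2 (beta_seq A1 \<alpha>) = sadic_value 2 (beta_seq A1 \<alpha>')"
proof (cases "\<alpha> = \<alpha>'")
  case False
  then obtain i where "\<alpha> i \<noteq> \<alpha>' i" by auto
  define k where "k = (LEAST i. \<alpha> i \<noteq> \<alpha>' i)"
  have prefix: "\<And>i. i < k \<Longrightarrow> \<alpha> i = \<alpha>' i"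
    unfolding k_def using not_less_Least by blast
  have "\<alpha> k \<noteq> \<alpha>' k"
    unfolding k_def by (rule LeastI) fact
  then consider "\<alpha> k < \<alpha>' k" | "\<alpha>' k < \<alpha> k" by linarith
  then show ?thesis
  proof cases
    case 1
    with assms prefix show ?thesis by (intro beta_value_first_diff)
  next
    case 2
    have "sadic_value 2 (beta_seq A1 \<alpha>') = sadic_value 2 (beta_seq A1 \<alpha>)"
      using assms(2,1) prefix[symmetric] 2 assms(3)[symmetric] by (rule beta_value_first_diff)
    then show ?thesis ..
  qed
qed simp

lemma f_map_at_code:
  assumes "inj_on hs {0..1}" "digit_seq s \<alpha>"
  shows "f_map s A1 hs h2 (hs (sadic_value s \<alpha>)) = h2 (sadic_value 2 (beta_seq A1 \<alpha>))"
proof -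
  define \<alpha>' where "\<alpha>' = (SOME \<alpha>'. digit_seq s \<alpha>' \<and> hs (sadic_value s \<alpha>') = hs (sadic_value s \<alpha>))"
  have "digit_seq s \<alpha>' \<and> hs (sadic_value s \<alpha>') = hs (sadic_value s \<alpha>)"
    unfolding \<alpha>'_def by (rule someI[of _ \<alpha>]) (simp add: assms(2))
  moreover from this have "sadic_value s \<alpha>' = sadic_value s \<alpha>"
    using inj_onD[OF assms(1)] sadic_value_in_unit assms(2) by blast
  ultimately show ?thesis
    unfolding f_map_def \<alpha>'_def[symmetric] using beta_value_eq_if_sadic_value_eq assms(2) by metis
qed

text \<open>With identity homeomorphisms, f_map is the map g of the proof idea.\<close>

lemma f_map_id_at_code:
  "digit_seq s \<alpha> \<Longrightarrow> f_map s A1 id id (sadic_value s \<alpha>) = sadic_value 2 (beta_seq A1 \<alpha>)"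
  using f_map_at_code[of id] by simp

lemma f_map_id_in_unit:
  assumes "y \<in> {0..1}"
  shows "f_map s A1 id id y \<in> {0..1}"
proof -
  obtain \<alpha> where "digit_seq s \<alpha>" "sadic_value s \<alpha> = y"
    using assms by (rule sadic_code_exists)
  then show ?thesis
    using f_map_id_at_code binary.sadic_value_in_unit[OF digit_seq_beta_seq] by metis
qed

lemma f_map_id_cylinder_dist:
  assumes "m < s ^ N" "real m \<le> real s ^ N * y" "real s ^ N * y \<le> real m + 1"
    "real m \<le> real s ^ N * y'" "real s ^ N * y' \<le> real m + 1"
  shows "\<bar>f_map s A1 id id y - f_map s A1 id id y'\<bar> \<le> 1 / 2 ^ N"
proof -
  obtain \<gamma> where \<gamma>: "digit_seq s \<gamma>" "sadic_value s (sadic_prepend s N m \<gamma>) = y"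
    using assms(1-3) by (rule sadic_cylinder_code)
  obtain \<gamma>' where \<gamma>': "digit_seq s \<gamma>'" "sadic_value s (sadic_prepend s N m \<gamma>') = y'"
    using assms(1,4,5) by (rule sadic_cylinder_code)
  have "beta_seq A1 (sadic_prepend s N m \<gamma>) i = beta_seq A1 (sadic_prepend s N m \<gamma>') i"
    if "i < N" for i
    using that by (intro beta_seq_prefix sadic_prepend_prefix) simp
  then have "\<bar>sadic_value 2 (beta_seq A1 (sadic_prepend s N m \<gamma>))
      - sadic_value 2 (beta_seq A1 (sadic_prepend s N m \<gamma>'))\<bar> \<le> 1 / 2 ^ N"
    using binary.sadic_value_prefix_dist[OF digit_seq_beta_seq digit_seq_beta_seq] by simp
  then show ?thesis
    using f_map_id_at_code digit_seq_sadic_prepend \<gamma> \<gamma>' by metis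
qed

lemma continuous_on_f_map_id: "continuous_on {0..1} (f_map s A1 id id)"
  unfolding continuous_on_iff
proof (intro ballI allI impI)
  fix y e :: real
  assume y: "y \<in> {0..1}" and "0 < e"
  then obtain N where N: "(1 / 2) ^ N < e / 2"
    using real_arch_pow_inv[of "e / 2" "1 / 2"] by auto
  have "\<bar>f_map s A1 id id y' - f_map s A1 id id y\<bar> < e"
    if y': "y' \<in> {0..1}" and close: "\<bar>y' - y\<bar> < 1 / real s ^ N" for y'
  proof -
    obtain m where m: "m < s ^ N" "real m \<le> real s ^ N * y" "real s ^ N * y \<le> real m + 1"
      using y by (rule sadic_cell_exists)
    obtain m' where m': "m' < s ^ N" "real m' \<le> real s ^ N * y'" "real s ^ N * y' \<le> real m' + 1"
      using y' by (rule sadic_cell_exists)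
    have "\<bar>real s ^ N * y' - real s ^ N * y\<bar> = real s ^ N * \<bar>y' - y\<bar>"
      by (simp add: abs_mult flip: right_diff_distrib)
    also have "\<dots> < 1"
      using close base by (simp add: field_simps)
    finally have "m' \<le> m + 1" "m \<le> m' + 1"
      using m m' by linarith+
    text \<open>The common endpoint of the two (equal or adjacent) cylinders.\<close>
    define z where "z = real (max m m') / real s ^ N"
    have z: "real s ^ N * z = real (max m m')"
      unfolding z_def using base by simp
    have "\<bar>f_map s A1 id id y' - f_map s A1 id id z\<bar> \<le> 1 / 2 ^ N"
      using m' z \<open>m \<le> m' + 1\<close> by (intro f_map_id_cylinder_dist) auto
    moreover have "\<bar>f_map s A1 id id z - f_map s A1 id id y\<bar> \<le> 1 / 2 ^ N"
      using m z \<open>m' \<le> m + 1\<close> by (intro f_map_id_cylinder_dist) auto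
    ultimately show ?thesis
      using N by (simp add: power_divide)
  qed
  moreover have "0 < 1 / real s ^ N" using base by simp
  ultimately show "\<exists>d>0. \<forall>y'\<in>{0..1}.
      dist y' y < d \<longrightarrow> dist (f_map s A1 id id y') (f_map s A1 id id y) < e"
    unfolding dist_real_def by blast
qed

lemma f_map_via_f_map_id:
  assumes "strict_mono_on {0..1} hs" "hs ` {0..1} = {0..1}" "x \<in> {0..1}"
  shows "f_map s A1 hs h2 x = h2 (f_map s A1 id id (the_inv_into {0..1} hs x))"
proof -
  have inj: "inj_on hs {0..1}" using assms(1) by (rule strict_mono_on_imp_inj_on)
  define y where "y = the_inv_into {0..1} hs x"
  have "y \<in> {0..1}" "hs y = x"
    unfolding y_def using assms(2,3)
    by (intro the_inv_into_into[OF inj] f_the_inv_into_f[OF inj], auto)+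
  moreover obtain \<alpha> where "digit_seq s \<alpha>" "sadic_value s \<alpha> = y"
    using \<open>y \<in> {0..1}\<close> by (rule sadic_code_exists)
  ultimately show ?thesis
    using f_map_at_code[OF inj] f_map_id_at_code unfolding y_def by metis
qed

lemma continuous_on_f_map:
  assumes "continuous_on {0..1} hs" "strict_mono_on {0..1} hs" "hs ` {0..1} = {0..1}"
    and "continuous_on {0..1} h2"
  shows "continuous_on {0..1} (f_map s A1 hs h2)"
proof -
  have inj: "inj_on hs {0..1}" using assms(2) by (rule strict_mono_on_imp_inj_on)
  have "continuous_on {0..1} (the_inv_into {0..1} hs)"
    using continuous_on_inv_into[OF assms(1) _ inj] assms(3) by simp
  moreover have "the_inv_into {0..1} hs ` {0..1} \<subseteq> {0..1}"
    using the_inv_into_into[OF inj] assms(3) by blast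
  ultimately have "continuous_on {0..1} (\<lambda>x. f_map s A1 id id (the_inv_into {0..1} hs x))"
    by (rule continuous_on_compose2[OF continuous_on_f_map_id])
  moreover have "(\<lambda>x. f_map s A1 id id (the_inv_into {0..1} hs x)) ` {0..1} \<subseteq> {0..1}"
    using \<open>the_inv_into {0..1} hs ` {0..1} \<subseteq> {0..1}\<close> f_map_id_in_unit by auto
  ultimately have "continuous_on {0..1} (\<lambda>x. h2 (f_map s A1 id id (the_inv_into {0..1} hs x)))"
    by (rule continuous_on_compose2[OF assms(4)])
  then show ?thesis
    by (rule continuous_on_eq) (simp add: f_map_via_f_map_id[OF assms(2,3)])
qed

end

section \<open>Counting base-s words by the changes of their binary images\<close>

lemma sum_lessThan_mult_split:
  fixes F :: "nat \<Rightarrow> 'a::comm_monoid_add"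
  shows "(\<Sum>m<K * b. F m) = (\<Sum>m<K. \<Sum>d<b. F (m * b + d))"
proof -
  have "sum F {m * b..<m * b + b} = (\<Sum>d<b. F (m * b + d))" for m
    using sum.shift_bounds_nat_ivl[of F 0 "m * b" b] by (simp add: atLeast0LessThan add.commute)
  then show ?thesis by (simp flip: sum.nat_group)
qed

fun beta_index :: "nat \<Rightarrow> nat set \<Rightarrow> nat \<Rightarrow> nat \<Rightarrow> nat" where
  "beta_index s A1 0 m = 0"
| "beta_index s A1 (Suc 0) m = (if m mod s \<in> A1 then 1 else 0)"
| "beta_index s A1 (Suc (Suc n)) m = 2 * beta_index s A1 (Suc n) (m div s) +
     (if m mod s = m div s mod s then beta_index s A1 (Suc n) (m div s) mod 2
      else 1 - beta_index s A1 (Suc n) (m div s) mod 2)"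

lemma beta_index_Suc:
  assumes "0 < n" "d < s"
  shows "beta_index s A1 (Suc n) (m * s + d) = 2 * beta_index s A1 n m +
    (if d = m mod s then beta_index s A1 n m mod 2 else 1 - beta_index s A1 n m mod 2)"
  using assms by (cases n) simp_all

lemma beta_index_less: "beta_index s A1 N m < 2 ^ N"
  by (induction s A1 N m rule: beta_index.induct) auto

lemma beta_seq_prepend_last:
  "beta_seq A1 (sadic_prepend s (Suc n) m \<gamma>) n = beta_index s A1 (Suc n) m mod 2"
proof (induction n arbitrary: m \<gamma>)
  case (Suc n)
  let ?\<alpha> = "sadic_prepend s (Suc n) (m div s) (case_nat (m mod s) \<gamma>)"
  have "?\<alpha> (Suc n) = m mod s" "?\<alpha> n = m div s mod s"
    using sadic_prepend_tail[of s "Suc n" _ _ 0] sadic_prepend_last by simp_all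
  then show ?case using Suc.IH by simp
qed simp

lemma beta_seq_prepend_sum:
  "(\<Sum>i<N. real (beta_seq A1 (sadic_prepend s N m \<gamma>) i) / 2 ^ Suc i)
    = real (beta_index s A1 N m) / 2 ^ N"
proof (induction N arbitrary: m \<gamma>)
  case (Suc N)
  show ?case
  proof (cases N)
    case (Suc n)
    let ?\<alpha> = "sadic_prepend s (Suc N) m \<gamma>"
    define b where "b = beta_index s A1 (Suc N) m mod 2"
    have B: "beta_index s A1 (Suc N) m = 2 * beta_index s A1 N (m div s) + b"
      unfolding b_def using Suc by auto
    have "(\<Sum>i<Suc N. real (beta_seq A1 ?\<alpha> i) / 2 ^ Suc i)
        = (\<Sum>i<N. real (beta_seq A1 ?\<alpha> i) / 2 ^ Suc i) + real (beta_seq A1 ?\<alpha> N) / 2 ^ Suc N"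
      by simp
    also have "\<dots> = real (beta_index s A1 N (m div s)) / 2 ^ N + real b / 2 ^ Suc N"
      unfolding b_def using Suc.IH beta_seq_prepend_last[of A1 s N m \<gamma>] by simp
    also have "\<dots> = real (beta_index s A1 (Suc N) m) / 2 ^ Suc N"
      unfolding B by (simp add: field_simps)
    finally show ?thesis .
  qed simp
qed simp

lemma beta_value_prepend_const:
  fixes s N m t :: nat and A1 :: "nat set"
  assumes "0 < N"
  defines "p \<equiv> beta_index s A1 N m mod 2"
  shows "sadic_value 2 (beta_seq A1 (sadic_prepend s N m (\<lambda>_. t)))
    = (real (beta_index s A1 N m) + real (if t = m mod s then p else 1 - p)) / 2 ^ N"
proof -
  obtain n where N: "N = Suc n" using assms(1) by (cases N) auto
  let ?\<alpha> = "sadic_prepend s N m (\<lambda>_. t)"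
  have "?\<alpha> j = t" if "n < j" for j
    using sadic_prepend_tail[of s N m _ "j - N"] that N by simp
  then have "beta_seq A1 ?\<alpha> j = (if t = m mod s then p else 1 - p)" if "N \<le> j" for j
    using beta_seq_const_tail[of n ?\<alpha> t j] that beta_seq_prepend_last[of A1 s n m]
      sadic_prepend_last unfolding p_def N by simp
  then show ?thesis
    using binary.sadic_value_eventually_const[OF digit_seq_beta_seq, of N] beta_seq_prepend_sum
    by (simp add: add_divide_distrib)
qed

fun bit_changes :: "nat \<Rightarrow> nat \<Rightarrow> nat" where
  "bit_changes 0 k = 0"
| "bit_changes (Suc 0) k = 0"
| "bit_changes (Suc (Suc n)) k =
     bit_changes (Suc n) (k div 2) + (if k mod 2 = k div 2 mod 2 then 0 else 1)"

lemma bit_changes_Suc: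
  assumes "0 < n" "c < 2"
  shows "bit_changes (Suc n) (k * 2 + c) = bit_changes n k + (if c = k mod 2 then 0 else 1)"
  using assms by (cases n) simp_all

lemma bit_changes_append:
  assumes "0 < L" "0 < M" "y < 2 ^ M"
  shows "bit_changes L x + bit_changes M y \<le> bit_changes (L + M) (x * 2 ^ M + y)"
  using assms(2,3)
proof (induction M arbitrary: y rule: nat_induct_non_zero)
  case 1
  then show ?case using bit_changes_Suc[OF assms(1), of y x] by simp
next
  case (Suc M)
  let ?z = "x * 2 ^ M + y div 2"
  have "?z mod 2 = y div 2 mod 2"
    using Suc.hyps by (simp add: mod_add_left_eq[symmetric] mod_mult_left_eq)
  moreover have "x * 2 ^ Suc M + y = ?z * 2 + y mod 2" by simp
  ultimately have A: "bit_changes (L + Suc M) (x * 2 ^ Suc M + y)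
      = bit_changes (L + M) ?z + (if y mod 2 = y div 2 mod 2 then 0 else 1)"
    using bit_changes_Suc[of "L + M" "y mod 2" ?z] assms(1) by (simp only: add_Suc_right)
  have "y = y div 2 * 2 + y mod 2" by simp
  then have B: "bit_changes (Suc M) y
      = bit_changes M (y div 2) + (if y mod 2 = y div 2 mod 2 then 0 else 1)"
    using bit_changes_Suc[OF Suc.hyps, of "y mod 2" "y div 2"] by simp
  have "y div 2 < 2 ^ M" using Suc.prems by simp
  then show ?case
    unfolding A B using Suc.IH[of "y div 2"] by simp
qed

lemma bit_changes_eq_0:
  assumes "0 < M" "y < 2 ^ M" "bit_changes M y = 0"
  shows "y = 0 \<or> Suc y = 2 ^ M"
  using assms
proof (induction M arbitrary: y rule: nat_induct_non_zero)
  case 1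
  then show ?case by auto
next
  case (Suc M)
  have "y = y div 2 * 2 + y mod 2" by simp
  then have "bit_changes (Suc M) y
      = bit_changes M (y div 2) + (if y mod 2 = y div 2 mod 2 then 0 else 1)"
    using bit_changes_Suc[OF Suc.hyps, of "y mod 2" "y div 2"] by simp
  with Suc.prems have "bit_changes M (y div 2) = 0" and last: "y mod 2 = y div 2 mod 2"
    by (simp_all split: if_splits)
  moreover have "y div 2 < 2 ^ M" using Suc.prems by simp
  ultimately have "y div 2 = 0 \<or> Suc (y div 2) = 2 ^ M" by (intro Suc.IH)
  then show ?case
  proof
    assume "y div 2 = 0"
    then show ?thesis using last div_mult_mod_eq[of y 2] by simp
  next
    assume top: "Suc (y div 2) = 2 ^ M"
    moreover have "even (2 ^ M :: nat)" using Suc.hyps by simp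
    ultimately have "y mod 2 = 1" using last by (metis even_Suc odd_iff_mod_2_eq_one)
    then have "Suc y = Suc (y div 2) * 2" by presburger
    then show ?thesis using top by simp
  qed
qed

lemma sum_beta_index_ge_weighted:
  fixes \<phi> :: "nat \<Rightarrow> real"
  assumes s: "3 \<le> s" and d0: "d0 < s" "d0 \<notin> A1" and d1: "d1 < s" "d1 \<in> A1"
    and "0 < N" and "\<And>k. 0 \<le> \<phi> k"
  shows "(\<Sum>k<2^N. 2 ^ bit_changes N k * \<phi> k) \<le> (\<Sum>m<s^N. \<phi> (beta_index s A1 N m))"
  using assms(6,7)
proof (induction N arbitrary: \<phi> rule: nat_induct_non_zero)
  case 1
  have "d0 \<noteq> d1" using d0 d1 by auto
  then have "\<phi> 0 + \<phi> 1 = (\<Sum>m\<in>{d0, d1}. \<phi> (beta_index s A1 1 m))"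
    using d0 d1 by simp
  also have "\<dots> \<le> (\<Sum>m<s. \<phi> (beta_index s A1 1 m))"
    using d0 d1 "1.prems" by (intro sum_mono2) auto
  finally show ?case by (simp add: numeral_2_eq_2)
next
  case (Suc n)
  text \<open>Of the s digits appended to m, the last digit of m keeps the last bit of the
    beta-index and at least two others flip it.\<close>
  define \<psi> where "\<psi> p = \<phi> (2 * p + p mod 2) + 2 * \<phi> (2 * p + (1 - p mod 2))" for p
  have "(\<Sum>k<2^Suc n. 2 ^ bit_changes (Suc n) k * \<phi> k)
      = (\<Sum>k<2^n. \<Sum>c<2. 2 ^ bit_changes (Suc n) (k * 2 + c) * \<phi> (k * 2 + c))"
    by (simp only: power_Suc2 sum_lessThan_mult_split)
  also have "\<dots> = (\<Sum>k<2^n. 2 ^ bit_changes n k * \<psi> k)"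
  proof (intro sum.cong refl)
    fix k
    have "bit_changes (Suc n) (k * 2 + c) = bit_changes n k + (if c = k mod 2 then 0 else 1)"
      if "c < 2" for c
      using Suc.hyps that by (rule bit_changes_Suc)
    moreover have "(\<Sum>c<2. g c) = g 0 + g 1" for g :: "nat \<Rightarrow> real"
      by (simp add: numeral_2_eq_2)
    ultimately show "(\<Sum>c<2. 2 ^ bit_changes (Suc n) (k * 2 + c) * \<phi> (k * 2 + c))
        = 2 ^ bit_changes n k * \<psi> k"
      unfolding \<psi>_def by (cases "even k") (auto simp: algebra_simps elim: oddE)
  qed
  also have "\<dots> \<le> (\<Sum>m<s^n. \<psi> (beta_index s A1 n m))"
    using Suc.prems by (intro Suc.IH) (simp add: \<psi>_def)
  also have "\<dots> \<le> (\<Sum>m<s^n. \<Sum>d<s. \<phi> (beta_index s A1 (Suc n) (m * s + d)))"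
  proof (intro sum_mono)
    fix m
    define a where "a = m mod s"
    define j1 j2 where "j1 = (if a = 0 then 1 else 0 :: nat)"
      and "j2 = (if a = 2 then 1 else 2 :: nat)"
    have j: "a < s" "j1 \<noteq> a" "j2 \<noteq> a" "j1 \<noteq> j2" "j1 < s" "j2 < s"
      using s unfolding a_def j1_def j2_def by auto
    have "\<psi> (beta_index s A1 n m) = (\<Sum>d\<in>{a, j1, j2}. \<phi> (beta_index s A1 (Suc n) (m * s + d)))"
      using j Suc.hyps unfolding \<psi>_def a_def by (simp add: beta_index_Suc)
    also have "\<dots> \<le> (\<Sum>d<s. \<phi> (beta_index s A1 (Suc n) (m * s + d)))"
      using j Suc.prems by (intro sum_mono2) auto
    finally show "\<psi> (beta_index s A1 n m) \<le> (\<Sum>d<s. \<phi> (beta_index s A1 (Suc n) (m * s + d)))" .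
  qed
  also have "\<dots> = (\<Sum>m<s^Suc n. \<phi> (beta_index s A1 (Suc n) m))"
    by (simp only: power_Suc2 sum_lessThan_mult_split)
  finally show ?case .
qed

section \<open>Masses of dyadic intervals\<close>

definition dyadic_mass :: "(real \<Rightarrow> real) \<Rightarrow> nat \<Rightarrow> nat \<Rightarrow> real" where
  "dyadic_mass h N k = h (real (Suc k) / 2 ^ N) - h (real k / 2 ^ N)"

lemma dyadic_points_in_unit:
  assumes "k < 2 ^ N"
  shows "real k / 2 ^ N \<in> {0..1}" "real (Suc k) / 2 ^ N \<in> {0..1}"
proof -
  have "real (Suc k) \<le> 2 ^ N"
    using assms by (metis Suc_leI of_nat_le_iff of_nat_numeral of_nat_power)
  then show "real k / 2 ^ N \<in> {0..1}" "real (Suc k) / 2 ^ N \<in> {0..1}"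
    using assms by (simp_all add: divide_le_eq_1)
qed

lemma dyadic_mass_nonneg:
  assumes "mono_on {0..1} h" "k < 2 ^ N"
  shows "0 \<le> dyadic_mass h N k"
  using mono_onD[OF assms(1) dyadic_points_in_unit[OF assms(2)]]
  unfolding dyadic_mass_def by (simp add: divide_right_mono)

lemma sum_dyadic_mass_refine:
  "(\<Sum>y<2 ^ M. dyadic_mass h (L + M) (x * 2 ^ M + y)) = dyadic_mass h L x"
proof -
  have "(\<Sum>y<2 ^ M. dyadic_mass h (L + M) (x * 2 ^ M + y))
      = h (real (x * 2 ^ M + 2 ^ M) / 2 ^ (L + M)) - h (real (x * 2 ^ M) / 2 ^ (L + M))"
    unfolding dyadic_mass_def
    using sum_lessThan_telescope[of "\<lambda>y. h (real (x * 2 ^ M + y) / 2 ^ (L + M))"] by simp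
  also have "real (x * 2 ^ M + 2 ^ M) / 2 ^ (L + M) = real (Suc x) / 2 ^ L"
    by (simp add: power_add field_simps)
  also have "real (x * 2 ^ M) / 2 ^ (L + M) = real x / 2 ^ L"
    by (simp add: power_add)
  finally show ?thesis unfolding dyadic_mass_def .
qed

lemma sum_dyadic_mass: "(\<Sum>k<2 ^ N. dyadic_mass h N k) = h 1 - h 0"
  using sum_dyadic_mass_refine[of h 0 N 0] by (simp add: dyadic_mass_def)

lemma eventually_dyadic_mass_less:
  assumes "continuous_on {0..1} h" "0 < \<epsilon>"
  shows "\<forall>\<^sub>F N in sequentially. \<forall>k<2 ^ N. dyadic_mass h N k < \<epsilon>"
proof -
  have "uniformly_continuous_on {0..1} h"
    using assms(1) by (rule compact_uniformly_continuous) simp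
  then obtain \<delta> where "0 < \<delta>" and \<delta>: "\<And>x y. x \<in> {0..1} \<Longrightarrow> y \<in> {0..1} \<Longrightarrow>
      dist y x < \<delta> \<Longrightarrow> dist (h y) (h x) < \<epsilon>"
    unfolding uniformly_continuous_on_def using assms(2) by blast
  obtain N0 where "(1 / 2) ^ N0 < \<delta>"
    using real_arch_pow_inv[OF \<open>0 < \<delta>\<close>, of "1 / 2"] by auto
  have "dyadic_mass h N k < \<epsilon>" if "N0 \<le> N" "k < 2 ^ N" for N k
  proof -
    note \<delta>[OF dyadic_points_in_unit[OF that(2)]]
    moreover have "(1 / 2 :: real) ^ N \<le> (1 / 2) ^ N0"
      using that(1) by (intro power_decreasing) auto
    then have "dist (real (Suc k) / 2 ^ N) (real k / 2 ^ N) < \<delta>"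
      using \<open>(1 / 2) ^ N0 < \<delta>\<close> by (simp add: dist_real_def power_divide add_divide_distrib)
    ultimately show ?thesis
      unfolding dyadic_mass_def by (simp add: dist_real_def)
  qed
  then show ?thesis unfolding eventually_sequentially by blast
qed

lemma append_index_less:
  fixes x y :: nat
  assumes "x < 2 ^ L" "y < 2 ^ M"
  shows "x * 2 ^ M + y < 2 ^ (L + M)"
proof -
  have "x * 2 ^ M + y < (x + 1) * 2 ^ M" using assms(2) by simp
  also have "\<dots> \<le> 2 ^ L * 2 ^ M" using assms(1) by (intro mult_right_mono) auto
  finally show ?thesis by (simp add: power_add)
qed

definition few_changes_mass :: "(real \<Rightarrow> real) \<Rightarrow> nat \<Rightarrow> nat \<Rightarrow> real" where
  "few_changes_mass h j N = (\<Sum>k<2 ^ N. if bit_changes N k < j then dyadic_mass h N k else 0)"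

lemma few_changes_mass_Suc_le:
  assumes "mono_on {0..1} h" "0 < L" "0 < M"
  shows "few_changes_mass h (Suc j) (L + M) \<le> few_changes_mass h j L
    + (\<Sum>x<2 ^ L. dyadic_mass h (L + M) (x * 2 ^ M)
        + dyadic_mass h (L + M) (x * 2 ^ M + (2 ^ M - 1)))"
proof -
  let ?\<mu> = "dyadic_mass h (L + M)"
  have "(if bit_changes (L + M) (x * 2 ^ M + y) < Suc j then ?\<mu> (x * 2 ^ M + y) else 0)
      \<le> (if bit_changes L x < j then ?\<mu> (x * 2 ^ M + y) else 0)
        + (if y = 0 then ?\<mu> (x * 2 ^ M + y) else 0)
        + (if y = 2 ^ M - 1 then ?\<mu> (x * 2 ^ M + y) else 0)"
    if "x < 2 ^ L" "y < 2 ^ M" for x y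
  proof -
    text \<open>A block with at most j changes either has at most j - 1 changes in its first L bits
      or its last M bits are constant.\<close>
    have "bit_changes L x < j \<or> y = 0 \<or> y = 2 ^ M - 1"
      if "bit_changes (L + M) (x * 2 ^ M + y) < Suc j"
      using that bit_changes_append[OF assms(2,3) \<open>y < 2 ^ M\<close>, of x]
        bit_changes_eq_0[OF assms(3) \<open>y < 2 ^ M\<close>] by fastforce
    moreover have "0 \<le> ?\<mu> (x * 2 ^ M + y)"
      using assms(1) append_index_less[OF that] by (rule dyadic_mass_nonneg)
    moreover have "1 < (2::nat) ^ M" using one_less_power[OF _ assms(3), of "2::nat"] by simp
    ultimately show ?thesis by auto
  qed
  then have "few_changes_mass h (Suc j) (L + M) \<le> (\<Sum>x<2 ^ L. \<Sum>y<2 ^ M.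
        (if bit_changes L x < j then ?\<mu> (x * 2 ^ M + y) else 0)
        + (if y = 0 then ?\<mu> (x * 2 ^ M + y) else 0)
        + (if y = 2 ^ M - 1 then ?\<mu> (x * 2 ^ M + y) else 0))"
    unfolding few_changes_mass_def power_add sum_lessThan_mult_split
    by (intro sum_mono) auto
  also have "\<dots> = few_changes_mass h j L
    + (\<Sum>x<2 ^ L. ?\<mu> (x * 2 ^ M) + ?\<mu> (x * 2 ^ M + (2 ^ M - 1)))"
    unfolding few_changes_mass_def sum.distrib[symmetric]
    by (intro sum.cong refl) (simp add: sum.distrib sum_dyadic_mass_refine flip: sum.If_cases)
  finally show ?thesis .
qed

lemma eventually_few_changes_mass_less:
  assumes "continuous_on {0..1} h" "mono_on {0..1} h" "0 < \<epsilon>"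
  shows "\<forall>\<^sub>F N in sequentially. few_changes_mass h j N < \<epsilon>"
  using assms(3)
proof (induction j arbitrary: \<epsilon>)
  case 0
  then show ?case by (simp add: few_changes_mass_def)
next
  case (Suc j)
  obtain L0 where L0: "\<And>L. L0 \<le> L \<Longrightarrow> few_changes_mass h j L < \<epsilon> / 2"
    using Suc.IH[of "\<epsilon> / 2"] Suc.prems unfolding eventually_sequentially by auto
  define L where "L = Suc L0"
  then have L: "0 < L" "few_changes_mass h j L < \<epsilon> / 2" using L0 by auto
  have "0 < \<epsilon> / (4 * 2 ^ L)" using Suc.prems by simp
  then obtain N0
    where N0: "\<And>N k. N0 \<le> N \<Longrightarrow> k < 2 ^ N \<Longrightarrow> dyadic_mass h N k < \<epsilon> / (4 * 2 ^ L)"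
    using eventually_dyadic_mass_less[OF assms(1)] unfolding eventually_sequentially by meson
  have "few_changes_mass h (Suc j) N < \<epsilon>" if "N0 + L + 1 \<le> N" for N
  proof -
    define M where "M = N - L"
    have N: "N = L + M" "0 < M" "N0 \<le> N" using that unfolding M_def by auto
    have "dyadic_mass h N (x * 2 ^ M) + dyadic_mass h N (x * 2 ^ M + (2 ^ M - 1))
        \<le> \<epsilon> / (2 * 2 ^ L)" if "x < 2 ^ L" for x
      using N0[OF N(3), of "x * 2 ^ M"] N0[OF N(3), of "x * 2 ^ M + (2 ^ M - 1)"]
        append_index_less[OF that, of 0 M] append_index_less[OF that, of "2 ^ M - 1" M]
      unfolding N(1) by simp
    then have "(\<Sum>x<2 ^ L. dyadic_mass h N (x * 2 ^ M)
          + dyadic_mass h N (x * 2 ^ M + (2 ^ M - 1)))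
        \<le> (\<Sum>x<(2::nat) ^ L. \<epsilon> / (2 * 2 ^ L))"
      by (intro sum_mono) simp
    also have "\<dots> = \<epsilon> / 2" by simp
    finally show ?thesis
      using few_changes_mass_Suc_le[OF assms(2) L(1) N(2), of j] L(2) unfolding N(1) by simp
  qed
  then show ?case unfolding eventually_sequentially by blast
qed

lemma weighted_dyadic_mass_unbounded:
  assumes "continuous_on {0..1} h" "mono_on {0..1} h" "h 0 < h 1"
  obtains N where "0 < N" "B \<le> (\<Sum>k<2 ^ N. 2 ^ bit_changes N k * dyadic_mass h N k)"
proof -
  define \<delta> where "\<delta> = h 1 - h 0"
  have "0 < \<delta>" using assms(3) unfolding \<delta>_def by simp
  then obtain j where j: "2 * B / \<delta> < 2 ^ j"
    using real_arch_pow[of 2 "2 * B / \<delta>"] by auto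
  obtain N0 where N0: "\<And>N. N0 \<le> N \<Longrightarrow> few_changes_mass h j N < \<delta> / 2"
    using eventually_few_changes_mass_less[OF assms(1,2), of "\<delta> / 2" j] \<open>0 < \<delta>\<close>
    unfolding eventually_sequentially by auto
  define N where "N = Suc N0"
  then have N: "0 < N" "few_changes_mass h j N < \<delta> / 2" using N0 by auto
  text \<open>Words with at least j changes carry weight at least 2^j and most of the mass.\<close>
  have "2 ^ j * (dyadic_mass h N k - (if bit_changes N k < j then dyadic_mass h N k else 0))
      \<le> 2 ^ bit_changes N k * dyadic_mass h N k" if "k < 2 ^ N" for k
    using dyadic_mass_nonneg[OF assms(2) that]
    by (auto intro: mult_right_mono power_increasing simp: not_less)
  then have "(\<Sum>k<2 ^ N. 2 ^ j *
        (dyadic_mass h N k - (if bit_changes N k < j then dyadic_mass h N k else 0)))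
      \<le> (\<Sum>k<2 ^ N. 2 ^ bit_changes N k * dyadic_mass h N k)"
    by (intro sum_mono) simp
  moreover have "(\<Sum>k<2 ^ N. 2 ^ j *
        (dyadic_mass h N k - (if bit_changes N k < j then dyadic_mass h N k else 0)))
      = 2 ^ j * (\<delta> - few_changes_mass h j N)"
    unfolding \<delta>_def few_changes_mass_def sum_dyadic_mass[of h N, symmetric]
    by (simp add: sum_distrib_left sum_subtractf right_diff_distrib)
  moreover have "B \<le> 2 ^ j * (\<delta> - few_changes_mass h j N)"
  proof -
    have "2 ^ j * few_changes_mass h j N \<le> 2 ^ j * (\<delta> / 2)"
      using N by (intro mult_left_mono) auto
    moreover have "B \<le> 2 ^ j * (\<delta> / 2)"
      using j \<open>0 < \<delta>\<close> by (simp add: field_simps)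
    ultimately show ?thesis unfolding right_diff_distrib by linarith
  qed
  ultimately have "B \<le> (\<Sum>k<2 ^ N. 2 ^ bit_changes N k * dyadic_mass h N k)"
    by linarith
  with N(1) show ?thesis by (rule that)
qed

section \<open>Unbounded variation\<close>

lemma sum_beta_index_dyadic_mass_unbounded:
  assumes "3 \<le> s" "d0 < s" "d0 \<notin> A1" "d1 < s" "d1 \<in> A1"
    and "continuous_on {0..1} h" "mono_on {0..1} h" "h 0 < h 1"
  obtains N where "0 < N" "B \<le> (\<Sum>m<s ^ N. dyadic_mass h N (beta_index s A1 N m))"
proof -
  obtain N where N: "0 < N" "B \<le> (\<Sum>k<2 ^ N. 2 ^ bit_changes N k * dyadic_mass h N k)"
    using weighted_dyadic_mass_unbounded[OF assms(6-8)] .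
  define \<phi> where "\<phi> k = (if k < 2 ^ N then dyadic_mass h N k else 0)" for k
  have "(\<Sum>k<2 ^ N. 2 ^ bit_changes N k * \<phi> k) \<le> (\<Sum>m<s ^ N. \<phi> (beta_index s A1 N m))"
    using assms(1-5) N(1)
    by (rule sum_beta_index_ge_weighted) (simp add: \<phi>_def dyadic_mass_nonneg[OF assms(7)])
  then have "B \<le> (\<Sum>m<s ^ N. dyadic_mass h N (beta_index s A1 N m))"
    using N(2) beta_index_less unfolding \<phi>_def by simp
  with N(1) show ?thesis by (rule that)
qed

lemma total_variation_ge_pairs:
  fixes F :: "real \<Rightarrow> real"
  assumes "\<And>m. m < K \<Longrightarrow> a m \<in> {0..1}" "\<And>m. m < K \<Longrightarrow> b m \<in> {0..1}"
    and "\<And>m. m < K \<Longrightarrow> a m \<le> b m" "\<And>m. Suc m < K \<Longrightarrow> b m \<le> a (Suc m)"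
  shows "ereal (\<Sum>m<K. \<bar>F (b m) - F (a m)\<bar>) \<le> total_variation F 0 1"
proof -
  define x where "x i = (if i = 0 then 0 else if i = 2 * K + 1 then 1
    else if even i then b (i div 2 - 1) else a (i div 2))" for i
  have x_odd: "x (Suc (2 * m)) = a m" and x_even: "x (Suc (Suc (2 * m))) = b m" if "m < K" for m
    using that unfolding x_def by auto
  have "x i \<le> x (Suc i)" if "i < 2 * K + 1" for i
  proof -
    have "i = 0 \<or> (\<exists>m. i = 2 * m + 1) \<or> (\<exists>m. i = 2 * m + 2)" by presburger
    then consider "i = 0" | m where "i = 2 * m + 1" | m where "i = 2 * m + 2" by blast
    then show ?thesis
    proof cases
      case 1
      then show ?thesis using assms(1)[of 0] x_odd[of 0] by (cases "K = 0") (auto simp: x_def)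
    next
      case (2 m)
      then show ?thesis using that assms(3)[of m] x_odd[of m] x_even[of m] by simp
    next
      case (3 m)
      then show ?thesis
        using that assms(2,4)[of m] x_even[of m] x_odd[of "Suc m"]
        by (cases "Suc m < K") (auto simp: x_def)
    qed
  qed
  then have "(x, 2 * K + 1) \<in> {(x, n). x 0 = 0 \<and> x n = 1 \<and> (\<forall>i<n. x i \<le> x (Suc i))}"
    unfolding x_def by simp
  moreover have "(\<Sum>m<K. \<bar>F (b m) - F (a m)\<bar>) \<le> (\<Sum>i<2 * K + 1. \<bar>F (x (Suc i)) - F (x i)\<bar>)"
  proof -
    have "(\<Sum>m<K. \<bar>F (b m) - F (a m)\<bar>) = (\<Sum>i\<in>(\<lambda>m. 2 * m + 1) ` {..<K}. \<bar>F (x (Suc i)) - F (x i)\<bar>)"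
      by (subst sum.reindex) (auto simp: inj_on_def x_odd x_even intro!: sum.cong)
    also have "\<dots> \<le> (\<Sum>i<2 * K + 1. \<bar>F (x (Suc i)) - F (x i)\<bar>)"
      by (intro sum_mono2) auto
    finally show ?thesis .
  qed
  ultimately show ?thesis
    unfolding total_variation_def by (intro SUP_upper2) auto
qed

context sadic_base
begin

lemma f_map_cylinder_jump:
  assumes "inj_on hs {0..1}" "mono_on {0..1} h2" "0 < N" "m < s ^ N"
    and "t < s" "t' < s" "(t = m mod s) \<noteq> (t' = m mod s)"
  shows "\<bar>f_map s A1 hs h2 (hs (sadic_value s (sadic_prepend s N m (\<lambda>_. t))))
      - f_map s A1 hs h2 (hs (sadic_value s (sadic_prepend s N m (\<lambda>_. t'))))\<bar>
    = dyadic_mass h2 N (beta_index s A1 N m)"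
proof -
  let ?B = "beta_index s A1 N m"
  have "digit_seq s (sadic_prepend s N m (\<lambda>_. c))" if "c < s" for c
    using that by (intro digit_seq_sadic_prepend) (simp add: digit_seq_def)
  then have "f_map s A1 hs h2 (hs (sadic_value s (sadic_prepend s N m (\<lambda>_. c))))
      = h2 ((real ?B + real (if c = m mod s then ?B mod 2 else 1 - ?B mod 2)) / 2 ^ N)"
    if "c < s" for c
    using f_map_at_code[OF assms(1)] beta_value_prepend_const[OF assms(3)] that by simp
  moreover have "0 \<le> dyadic_mass h2 N ?B"
    using assms(2) beta_index_less by (rule dyadic_mass_nonneg)
  moreover have "?B mod 2 = 0 \<or> ?B mod 2 = 1" by auto
  ultimately show ?thesis
    using assms(5-7) unfolding dyadic_mass_def by (auto simp: add.commute)
qed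

lemma total_variation_f_map_ge:
  assumes "strict_mono_on {0..1} hs" "hs ` {0..1} = {0..1}" "mono_on {0..1} h2" "0 < N"
  shows "ereal (\<Sum>m<s ^ N. dyadic_mass h2 N (beta_index s A1 N m))
    \<le> total_variation (f_map s A1 hs h2) 0 1"
proof -
  text \<open>On the cylinder of m, f maps the points with constant tails 0 and t m to the two
    endpoints of the h2-image of the dyadic interval indexed by the beta-index of m.\<close>
  define t where "t m = (if m mod s = 0 then 1 else m mod s)" for m
  define \<alpha>0 \<alpha>t where "\<alpha>0 m = sadic_prepend s N m (\<lambda>_. 0)"
    and "\<alpha>t m = sadic_prepend s N m (\<lambda>_. t m)" for m
  have t: "t m < s" "0 < t m" "(t m = m mod s) \<noteq> (0 = m mod s)" for m
    using base unfolding t_def by auto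
  have digits: "digit_seq s (\<alpha>0 m)" "digit_seq s (\<alpha>t m)" for m
  proof -
    have "digit_seq s (\<lambda>_. 0)" "digit_seq s (\<lambda>_. t m)"
      using base t(1) by (simp_all add: digit_seq_def)
    then show "digit_seq s (\<alpha>0 m)" "digit_seq s (\<alpha>t m)"
      unfolding \<alpha>0_def \<alpha>t_def by (simp_all add: digit_seq_sadic_prepend)
  qed
  have val: "sadic_value s (\<alpha>0 m) = real m / real s ^ N"
    "sadic_value s (\<alpha>t m) = (real m + real (t m) / (real s - 1)) / real s ^ N" if "m < s ^ N" for m
    unfolding \<alpha>0_def \<alpha>t_def using sadic_value_prepend[OF _ that] sadic_value_const base
    by (simp_all add: digit_seq_def t(1))
  have "0 \<le> real (t m) / (real s - 1)" "real (t m) / (real s - 1) \<le> 1" for m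
    using t(1)[of m] base by (simp_all add: divide_le_eq_1 of_nat_diff)
  then have "sadic_value s (\<alpha>0 m) \<le> sadic_value s (\<alpha>t m)" if "m < s ^ N" for m
    using that by (simp add: val divide_right_mono)
  moreover have "sadic_value s (\<alpha>t m) \<le> sadic_value s (\<alpha>0 (Suc m))" if "Suc m < s ^ N" for m
    using that \<open>\<And>m. real (t m) / (real s - 1) \<le> 1\<close> by (simp add: val divide_right_mono)
  moreover note mono_onD[OF strict_mono_on_imp_mono_on[OF assms(1)]]
  moreover have "hs (sadic_value s (\<alpha>0 m)) \<in> {0..1}" "hs (sadic_value s (\<alpha>t m)) \<in> {0..1}" for m
    using assms(2) sadic_value_in_unit[OF digits(1)] sadic_value_in_unit[OF digits(2)] by blast+
  ultimately have "ereal (\<Sum>m<s ^ N. \<bar>f_map s A1 hs h2 (hs (sadic_value s (\<alpha>t m)))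
      - f_map s A1 hs h2 (hs (sadic_value s (\<alpha>0 m)))\<bar>) \<le> total_variation (f_map s A1 hs h2) 0 1"
    using sadic_value_in_unit[OF digits(1)] sadic_value_in_unit[OF digits(2)]
    by (intro total_variation_ge_pairs) (auto simp del: atLeastAtMost_iff)
  moreover have "\<bar>f_map s A1 hs h2 (hs (sadic_value s (\<alpha>t m)))
      - f_map s A1 hs h2 (hs (sadic_value s (\<alpha>0 m)))\<bar> = dyadic_mass h2 N (beta_index s A1 N m)"
    if "m < s ^ N" for m
    unfolding \<alpha>0_def \<alpha>t_def using strict_mono_on_imp_inj_on[OF assms(1)] assms(3,4) that t base
    by (intro f_map_cylinder_jump) auto
  ultimately show ?thesis by simp
qed

end

theorem theorem4:
  fixes s :: nat and A0 A1 :: "nat set" and hs h2 :: "real \<Rightarrow> real"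
  assumes "s > 2"
    and "A0 \<inter> A1 = {}" and "A0 \<union> A1 = {0..<s}"
    and "A0 \<noteq> {0..<s}" and "A1 \<noteq> {0..<s}"
    and "continuous_on {0..1} hs" and "strict_mono_on {0..1} hs" and "hs ` {0..1} = {0..1}"
    and "continuous_on {0..1} h2" and "strict_mono_on {0..1} h2" and "h2 ` {0..1} = {0..1}"
  shows "continuous_on {0..1} (f_map s A1 hs h2)
         \<and> total_variation (f_map s A1 hs h2) 0 1 = \<infinity>"
proof
  interpret sadic_base s using assms(1) by unfold_locales simp
  show "continuous_on {0..1} (f_map s A1 hs h2)"
    using assms(6-9) by (rule continuous_on_f_map)
  obtain d0 d1 where d0: "d0 < s" "d0 \<notin> A1" and d1: "d1 < s" "d1 \<in> A1"
  proof -
    obtain d0 d1 where "d0 \<in> {0..<s} - A1" "d1 \<in> {0..<s} - A0"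
      using assms(3-5) by blast
    with assms(3) show thesis by (intro that[of d0 d1]) auto
  qed
  have h2: "mono_on {0..1} h2" "h2 0 < h2 1"
    using assms(10) by (auto intro: strict_mono_on_imp_mono_on strict_mono_onD)
  have "3 \<le> s" using assms(1) by simp
  show "total_variation (f_map s A1 hs h2) 0 1 = \<infinity>"
  proof (rule ereal_top)
    fix B
    obtain N where "0 < N" "B \<le> (\<Sum>m<s ^ N. dyadic_mass h2 N (beta_index s A1 N m))"
      by (rule sum_beta_index_dyadic_mass_unbounded[OF \<open>3 \<le> s\<close> d0 d1 assms(9) h2])
    then show "ereal B \<le> total_variation (f_map s A1 hs h2) 0 1"
      using total_variation_f_map_ge[OF assms(7,8) h2(1)] by (meson ereal_less_eq(3) order_trans)
  qed
qed

end
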